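(* Let $\tau$ be a real representation of $\mathrm{SO}(D)$ on $\mathbb{R}^N$ and let $\mathcal{D}\in\mathrm{Cov}(\tau,\mathbb{R}^N)$ be strongly regular, i.e. $\mathcal{D}:\mathcal{S}(\mathbb{R}^D)\otimes\mathbb{R}^N\to\mathcal{S}(\mathbb{R}^D)\otimes\mathbb{R}^N$ is a continuous bijection. Let $\mathcal{R}:\mathcal{S}(\mathbb{R}^D)\otimes\mathbb{R}^N\to\mathcal{S}(\mathbb{R}^D)\otimes\mathbb{R}^N$ be a continuous linear map with $\mathcal{R}^2=\mathrm{id}$ mapping $\mathcal{S}(\mathbb{R}^D_{+})\otimes\mathbb{R}^N$ into $\mathcal{S}(\mathbb{R}^D_{-})\otimes\mathbb{R}^N$ and $\mathcal{S}(\mathbb{R}^D_{-})\otimes\mathbb{R}^N$ into $\mathcal{S}(\mathbb{R}^D_{+})\otimes\mathbb{R}^N$. Let $\eta$ be an $\mathcal{R}$-reflection positive generalized random field indexed by $\mathcal{S}(\mathbb{R}^D)\otimes\mathbb{R}^N$, and let $\varphi$ be the weak solution of $\tilde{\mathcal{D}}\varphi=\eta$, with characteristic functional $\Gamma_\varphi(f)=\Gamma_\eta(\mathcal{D}^{-1}f)$. Define $$\mathcal{F}_+=\{f=\mathcal{D}g:\ g\in\mathcal{S}(\mathbb{R}^D_+)\otimes\mathbb{R}^N,\ [\mathcal{R},\mathcal{D}]g=0\}.$$ Then for all finite sequences $c_k\in\mathbb{C}$ and $f_k\in\mathcal{F}_+$, $$\sum_{k,l}c_k\overline{c_l}\,\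Gamma_\varphi(f_k-\mathcal{R}f_l)\ge0.$$
   Context: $\mathcal{S}(\mathbb{R}^D_{\pm})=\{f\in\mathcal{S}(\mathbb{R}^D):\operatorname{supp}f\subset\{x_0\ge0\}\ (\text{resp. }\{x_0\le0\})\}$. $\mathrm{Cov}(\tau,\mathbb{R}^N)$ is the set of operators $\sum_jB_j\partial/\partial x_j+mE$ commuting with all $(T_gf)(x)=\tau(g)f(g^{-1}x)$, $g\in\mathrm{SO}(D)$; $\tilde{\mathcal{D}}$ is the transpose of $\mathcal{D}$. $\Gamma_\xi(f)=E(e^{i\langle\xi,f\rangle})$ is the characteristic functional. The field $\eta$ is $\mathcal{R}$-reflection positive if $\sum_{k,l}c_k\overline{c_l}\Gamma_\eta(f_k-\mathcal{R}f_l)\ge0$ for all finite sequences $c_k\in\mathbb{C}$, $f_k\in\mathcal{S}(\mathbb{R}^D_+)\otimes\mathbb{R}^N$. *)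

theory Defs
  imports "HOL-Analysis.Analysis" "HOL-Probability.Probability" "HOL-Library.Complex_Order"
begin

text \<open>Vector-valued functions R^D -> R^N are modelled as real^'d => real^'n
  (D = CARD('d), N = CARD('n)). The coordinate i0 :: 'd plays the role of x_0.\<close>

type_synonym ('d, 'n) vfun = "real^'d \<Rightarrow> real^'n"

primrec pd :: "'d::finite list \<Rightarrow> ('d, 'n::finite) vfun \<Rightarrow> ('d, 'n) vfun" where
  "pd [] f = f"
| "pd (i # is) f = (\<lambda>x. frechet_derivative (pd is f) (at x) (axis i 1))"

definition smooth_fun :: "('d::finite, 'n::finite) vfun \<Rightarrow> bool" where
  "smooth_fun f \<longleftrightarrow> (\<forall>is x. pd is f differentiable (at x))"

definition schwartz :: "('d::finite, 'n::finite) vfun set" where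
  "schwartz = {f. smooth_fun f \<and>
     (\<forall>is (k::nat). bounded (range (\<lambda>x. (1 + norm x) ^ k *\<^sub>R pd is f x)))}"

definition snorm :: "nat \<Rightarrow> ('d::finite, 'n::finite) vfun \<Rightarrow> real" where
  "snorm m f = Sup {(1 + norm x) ^ k * norm (pd is f x) | x k is. k \<le> m \<and> length is \<le> m}"

definition schwartz_clm :: "(('d::finite, 'n::finite) vfun \<Rightarrow> ('d, 'n) vfun) \<Rightarrow> bool" where
  "schwartz_clm T \<longleftrightarrow> T ` schwartz \<subseteq> schwartz
     \<and> (\<forall>f\<in>schwartz. \<forall>g\<in>schwartz. T (\<lambda>x. f x + g x) = (\<lambda>x. T f x + T g x))
     \<and> (\<forall>a f. f \<in> schwartz \<longrightarrow> T (\<lambda>x. a *\<^sub>R f x) = (\<lambda>x. a *\<^sub>R T f x))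
     \<and> (\<forall>m. \<exists>m' C. \<forall>f\<in>schwartz. snorm m (T f) \<le> C * snorm m' f)"

definition schwartz_functional :: "(('d::finite, 'n::finite) vfun \<Rightarrow> real) \<Rightarrow> bool" where
  "schwartz_functional L \<longleftrightarrow>
       (\<forall>f\<in>schwartz. \<forall>g\<in>schwartz. L (\<lambda>x. f x + g x) = L f + L g)
     \<and> (\<forall>a f. f \<in> schwartz \<longrightarrow> L (\<lambda>x. a *\<^sub>R f x) = a * L f)
     \<and> (\<exists>m C. \<forall>f\<in>schwartz. \<bar>L f\<bar> \<le> C * snorm m f)"

definition S_plus :: "'d \<Rightarrow> ('d::finite, 'n::finite) vfun set" where
  "S_plus i0 = {f \<in> schwartz. closure {x. f x \<noteq> 0} \<subseteq> {x. 0 \<le> x $ i0}}"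

definition S_minus :: "'d \<Rightarrow> ('d::finite, 'n::finite) vfun set" where
  "S_minus i0 = {f \<in> schwartz. closure {x. f x \<noteq> 0} \<subseteq> {x. x $ i0 \<le> 0}}"

definition SO :: "(real^'d^'d::finite) set" where
  "SO = {g. orthogonal_matrix g \<and> det g = 1}"

definition real_rep_SO :: "(real^'d^'d \<Rightarrow> real^'n^'n) \<Rightarrow> bool" where
  "real_rep_SO \<tau> \<longleftrightarrow> (\<forall>g\<in>SO. \<forall>h\<in>SO. \<tau> (g ** h) = \<tau> g ** \<tau> h)
     \<and> \<tau> (mat 1) = mat 1 \<and> continuous_on SO \<tau>"

definition Tact :: "(real^'d^'d \<Rightarrow> real^'n^'n) \<Rightarrow> real^'d^'d \<Rightarrow> ('d::finite, 'n::finite) vfun \<Rightarrow> ('d, 'n) vfun" where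
  "Tact \<tau> g f = (\<lambda>x. \<tau> g *v f (matrix_inv g *v x))"

definition Cov :: "(real^'d^'d \<Rightarrow> real^'n^'n) \<Rightarrow> (('d::finite, 'n::finite) vfun \<Rightarrow> ('d, 'n) vfun) set" where
  "Cov \<tau> = {Dop. (\<exists>(B :: 'd \<Rightarrow> real^'n^'n) (m :: real).
                 \<forall>f\<in>schwartz. Dop f = (\<lambda>x. (\<Sum>j\<in>UNIV. B j *v pd [j] f x) + m *\<^sub>R (mat 1 *v f x)))
            \<and> (\<forall>g\<in>SO. \<forall>f\<in>schwartz. Dop (Tact \<tau> g f) = Tact \<tau> g (Dop f))}"

definition gen_random_field :: "'w measure \<Rightarrow> ('w \<Rightarrow> ('d::finite, 'n::finite) vfun \<Rightarrow> real) \<Rightarrow> bool" where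
  "gen_random_field M X \<longleftrightarrow> prob_space M
     \<and> (\<forall>f\<in>schwartz. (\<lambda>\<omega>. X \<omega> f) \<in> borel_measurable M)
     \<and> (\<forall>\<omega>\<in>space M. schwartz_functional (X \<omega>))"

definition char_functional :: "'w measure \<Rightarrow> ('w \<Rightarrow> ('d::finite, 'n::finite) vfun \<Rightarrow> real) \<Rightarrow> ('d, 'n) vfun \<Rightarrow> complex" where
  "char_functional M X f = (\<integral>\<omega>. cis (X \<omega> f) \<partial>M)"

definition refl_positive_on :: "'w measure \<Rightarrow> ('w \<Rightarrow> ('d::finite, 'n::finite) vfun \<Rightarrow> real)
    \<Rightarrow> (('d, 'n) vfun \<Rightarrow> ('d, 'n) vfun) \<Rightarrow> ('d, 'n) vfun set \<Rightarrow> bool" where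
  "refl_positive_on M X R A \<longleftrightarrow>
     (\<forall>(n::nat) (c :: nat \<Rightarrow> complex) (f :: nat \<Rightarrow> ('d, 'n) vfun). (\<forall>k<n. f k \<in> A) \<longrightarrow>
        0 \<le> (\<Sum>k<n. \<Sum>l<n. c k * cnj (c l) * char_functional M X (\<lambda>x. f k x - R (f l) x)))"

definition refl_positive :: "'d \<Rightarrow> 'w measure \<Rightarrow> ('w \<Rightarrow> ('d::finite, 'n::finite) vfun \<Rightarrow> real)
    \<Rightarrow> (('d, 'n) vfun \<Rightarrow> ('d, 'n) vfun) \<Rightarrow> bool" where
  "refl_positive i0 M X R \<longleftrightarrow> refl_positive_on M X R (S_plus i0)"

definition F_plus :: "'d \<Rightarrow> (('d::finite, 'n::finite) vfun \<Rightarrow> ('d, 'n) vfun)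
    \<Rightarrow> (('d, 'n) vfun \<Rightarrow> ('d, 'n) vfun) \<Rightarrow> ('d, 'n) vfun set" where
  "F_plus i0 Dop R = {Dop g | g. g \<in> S_plus i0 \<and> R (Dop g) = Dop (R g)}"

end

theory Submission
  imports Defs
begin

text \<open>Since \<open>\<phi>\<close> solves \<open>D\<^sup>T \<phi> = \<eta>\<close> weakly, \<open>\<Gamma>\<^sub>\<phi>(D g) = \<Gamma>\<^sub>\<eta>(g)\<close> for every test
  function \<open>g\<close>. If \<open>f\<^sub>k = D g\<^sub>k\<close> with \<open>g\<^sub>k\<close> supported in the half space \<open>x\<^sub>0 \<ge> 0\<close> and
  \<open>R D g\<^sub>k = D R g\<^sub>k\<close>, then by linearity \<open>f\<^sub>k - R f\<^sub>l = D (g\<^sub>k - R g\<^sub>l)\<close>, so the quadratic form of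
  \<open>\<phi>\<close> on the \<open>f\<^sub>k\<close> is the quadratic form of \<open>\<eta>\<close> on the \<open>g\<^sub>k\<close>, which is nonnegative by
  reflection positivity of \<open>\<eta>\<close>.\<close>

lemma pd_diff:
  fixes f g :: "('d::finite, 'n::finite) vfun"
  assumes "smooth_fun f" "smooth_fun g"
  shows "pd is (\<lambda>x. f x - g x) = (\<lambda>x. pd is f x - pd is g x)"
proof (induction "is")
  case Nil
  then show ?case by simp
next
  case (Cons i js)
  have "frechet_derivative (\<lambda>y. pd js f y - pd js g y) (at x) =
      (\<lambda>h. frechet_derivative (pd js f) (at x) h - frechet_derivative (pd js g) (at x) h)" for x
  proof -
    have "(pd js f has_derivative frechet_derivative (pd js f) (at x)) (at x)"
      and "(pd js g has_derivative frechet_derivative (pd js g) (at x)) (at x)"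
      using assms frechet_derivative_works unfolding smooth_fun_def by blast+
    from has_derivative_diff[OF this] show ?thesis
      by (rule frechet_derivative_at[symmetric])
  qed
  then show ?case
    by (simp add: Cons.IH)
qed

lemma smooth_fun_diff:
  fixes f g :: "('d::finite, 'n::finite) vfun"
  assumes "smooth_fun f" "smooth_fun g"
  shows "smooth_fun (\<lambda>x. f x - g x)"
  using assms unfolding smooth_fun_def pd_diff[OF assms] by (blast intro: differentiable_diff)

lemma schwartz_diff:
  fixes f g :: "('d::finite, 'n::finite) vfun"
  assumes "f \<in> schwartz" "g \<in> schwartz"
  shows "(\<lambda>x. f x - g x) \<in> schwartz"
proof -
  have sf: "smooth_fun f" and sg: "smooth_fun g"
    using assms unfolding schwartz_def by blast+
  have "bounded (range (\<lambda>x. (1 + norm x) ^ k *\<^sub>R pd is (\<lambda>x. f x - g x) x))" for "is" k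
  proof -
    have "bounded (range (\<lambda>x. (1 + norm x) ^ k *\<^sub>R pd is f x))"
      and "bounded (range (\<lambda>x. (1 + norm x) ^ k *\<^sub>R pd is g x))"
      using assms unfolding schwartz_def by blast+
    from bounded_minus_comp[OF this] show ?thesis
      by (simp add: pd_diff[OF sf sg] scaleR_diff_right)
  qed
  with smooth_fun_diff[OF sf sg] show ?thesis
    unfolding schwartz_def by blast
qed

lemma schwartz_clm_diff:
  assumes "schwartz_clm T" "f \<in> schwartz" "g \<in> schwartz"
  shows "T (\<lambda>x. f x - g x) = (\<lambda>x. T f x - T g x)"
proof -
  define h where "h = (\<lambda>x. f x - g x)"
  have "h \<in> schwartz"
    unfolding h_def using assms(2,3) by (rule schwartz_diff)
  moreover have "f = (\<lambda>x. h x + g x)"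
    unfolding h_def by simp
  ultimately have "T f = (\<lambda>x. T h x + T g x)"
    using assms(1,3) unfolding schwartz_clm_def by metis
  then show ?thesis
    unfolding h_def by (simp add: fun_eq_iff)
qed

lemma char_functional_weak_solution:
  assumes "\<forall>\<omega>\<in>space M. \<phi> \<omega> (T g) = \<eta> \<omega> g"
  shows "char_functional M \<phi> (T g) = char_functional M \<eta> g"
  unfolding char_functional_def using assms by (intro Bochner_Integration.integral_cong) auto

lemma refl_positive_on_subset:
  assumes "refl_positive_on M X R A" "B \<subseteq> A"
  shows "refl_positive_on M X R B"
  using assms unfolding refl_positive_on_def by (meson subsetD)

lemma refl_positive_on_weak_solution:
  assumes rp: "refl_positive_on M \<eta> R B"
    and T: "schwartz_clm T"
    and B: "B \<subseteq> schwartz" "R ` B \<subseteq> schwartz"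
    and commute: "\<forall>g\<in>B. R (T g) = T (R g)"
    and weak_sol: "\<forall>\<omega>\<in>space M. \<forall>g\<in>schwartz. \<phi> \<omega> (T g) = \<eta> \<omega> g"
  shows "refl_positive_on M \<phi> R (T ` B)"
  unfolding refl_positive_on_def
proof (intro allI impI)
  fix n :: nat and c :: "nat \<Rightarrow> complex" and f
  assume "\<forall>k<n. f k \<in> T ` B"
  then have "\<forall>k\<in>{..<n}. \<exists>g. g \<in> B \<and> f k = T g"
    by blast
  then obtain g where g: "\<forall>k<n. g k \<in> B \<and> f k = T (g k)"
    by (metis bchoice lessThan_iff)
  have "char_functional M \<phi> (\<lambda>x. f k x - R (f l) x) = char_functional M \<eta> (\<lambda>x. g k x - R (g l) x)"
    if "k < n" "l < n" for k l
  proof -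
    have "g k \<in> schwartz" "R (g l) \<in> schwartz"
      using g that B by auto
    then have "(\<lambda>x. f k x - R (f l) x) = T (\<lambda>x. g k x - R (g l) x)"
      using g that commute by (simp add: schwartz_clm_diff[OF T])
    moreover have "(\<lambda>x. g k x - R (g l) x) \<in> schwartz"
      using \<open>g k \<in> schwartz\<close> \<open>R (g l) \<in> schwartz\<close> by (rule schwartz_diff)
    ultimately show ?thesis
      using weak_sol by (simp add: char_functional_weak_solution)
  qed
  then have "(\<Sum>k<n. \<Sum>l<n. c k * cnj (c l) * char_functional M \<phi> (\<lambda>x. f k x - R (f l) x)) =
      (\<Sum>k<n. \<Sum>l<n. c k * cnj (c l) * char_functional M \<eta> (\<lambda>x. g k x - R (g l) x))"
    by (intro sum.cong) auto
  also have "0 \<le> \<dots>"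
    using rp g unfolding refl_positive_on_def by blast
  finally show "0 \<le> (\<Sum>k<n. \<Sum>l<n. c k * cnj (c l) * char_functional M \<phi> (\<lambda>x. f k x - R (f l) x))"
    by simp
qed

lemma F_plus_eq_image:
  "F_plus i0 Dop R = Dop ` {g \<in> S_plus i0. R (Dop g) = Dop (R g)}"
  unfolding F_plus_def by blast

theorem proposition2p27:
  fixes \<tau> :: "real^'d^'d \<Rightarrow> real^'n^'n"
    and Dop :: "('d::finite, 'n::finite) vfun \<Rightarrow> ('d, 'n) vfun"
    and R :: "('d, 'n) vfun \<Rightarrow> ('d, 'n) vfun"
    and i0 :: 'd
    and M :: "'w measure"
    and \<eta> \<phi> :: "'w \<Rightarrow> ('d, 'n) vfun \<Rightarrow> real"
  assumes rep: "real_rep_SO \<tau>"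
    and cov: "Dop \<in> Cov \<tau>"
    and D_cont: "schwartz_clm Dop"
    and D_bij: "bij_betw Dop schwartz schwartz"
    and R_cont: "schwartz_clm R"
    and R_inv: "\<forall>f\<in>schwartz. R (R f) = f"
    and R_pm: "R ` S_plus i0 \<subseteq> S_minus i0"
    and R_mp: "R ` S_minus i0 \<subseteq> S_plus i0"
    and eta: "gen_random_field M \<eta>"
    and eta_rp: "refl_positive i0 M \<eta> R"
    and phi: "gen_random_field M \<phi>"
    and weak_sol: "\<forall>\<omega>\<in>space M. \<forall>g\<in>schwartz. \<phi> \<omega> (Dop g) = \<eta> \<omega> g"
  shows "\<forall>(n::nat) (c :: nat \<Rightarrow> complex) (f :: nat \<Rightarrow> ('d, 'n) vfun).
           (\<forall>k<n. f k \<in> F_plus i0 Dop R) \<longrightarrow>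
           0 \<le> (\<Sum>k<n. \<Sum>l<n. c k * cnj (c l) * char_functional M \<phi> (\<lambda>x. f k x - R (f l) x))"
proof -
  define B where "B = {g \<in> S_plus i0. R (Dop g) = Dop (R g)}"
  have "refl_positive_on M \<eta> R B"
    using eta_rp unfolding refl_positive_def B_def by (rule refl_positive_on_subset) blast
  moreover have "B \<subseteq> schwartz" "R ` B \<subseteq> schwartz"
    using R_pm unfolding B_def S_plus_def S_minus_def by blast+
  ultimately have "refl_positive_on M \<phi> R (Dop ` B)"
    using D_cont weak_sol by (intro refl_positive_on_weak_solution) (auto simp: B_def)
  then show ?thesis
    unfolding F_plus_eq_image B_def[symmetric] refl_positive_on_def .
qed

end
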